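(* Let $N\ge1$ and $p\in(0,1)$. Then $$\min_{M\in\{1,\dots,N\}}\ \min_{C_{N,M}\in\{0,1\}^{N\times M}}\bigl(M+B_{M,C_{N,M},p}\bigr)\ \ge\ N\bar A_p,$$ where $\bar A_p:=\min_{\vec m\in\{0,1,\dots,N\}^N}A_p(\vec m)$ and $$A_p(\vec m):=\sum_{i=1}^N\frac{m_i}{i}+q\,0^{m_1}\exp\Bigl(-\sum_{i=2}^N m_i a^i_p\Bigr),\qquad a^i_p:=\bigl|\log\bigl(1-(1-p)^{i-1}\bigr)\bigr|.$$
   Context: $q:=1-p$, $\log$ is the natural logarithm, and $0^0=1$ (so $0^{m_1}=1$ if $m_1=0$ and $0$ otherwise). For an $N\times M$ binary matrix $C_{N,M}=(c_{i,a})$, $d_a:=\sum_{l=1}^N c_{l,a}$ and $B_{M,C_{N,M},p}:=q\sum_{i=1}^N\prod_{a=1}^M(1-q^{d_a-1})^{c_{i,a}}$. *)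

theory Defs
  imports Complex_Main "HOL-Library.FuncSet"
begin

definition colsum :: "nat \<Rightarrow> (nat \<Rightarrow> nat \<Rightarrow> nat) \<Rightarrow> nat \<Rightarrow> nat" where
  "colsum N c a = (\<Sum>l=1..N. c l a)"

definition Bfun :: "nat \<Rightarrow> nat \<Rightarrow> (nat \<Rightarrow> nat \<Rightarrow> nat) \<Rightarrow> real \<Rightarrow> real" where
  "Bfun N M c p = (1 - p) * (\<Sum>i=1..N. \<Prod>a=1..M. (1 - (1 - p) ^ (colsum N c a - 1)) ^ (c i a))"

definition a_coef :: "real \<Rightarrow> nat \<Rightarrow> real" where
  "a_coef p i = \<bar>ln (1 - (1 - p) ^ (i - 1))\<bar>"

definition Afun :: "nat \<Rightarrow> real \<Rightarrow> (nat \<Rightarrow> nat) \<Rightarrow> real" where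
  "Afun N p m = (\<Sum>i=1..N. real (m i) / real i)
      + (1 - p) * (0::real) ^ (m 1) * exp (- (\<Sum>i=2..N. real (m i) * a_coef p i))"

definition Abar :: "nat \<Rightarrow> real \<Rightarrow> real" where
  "Abar N p = Min (Afun N p ` ({1..N} \<rightarrow>\<^sub>E {0..N}))"

end

theory Submission
  imports Defs
begin

text \<open>Row by row: the columns a with c_{j,a} = 1, counted according to their column sum d_a,
give a vector m with m_i = #{a. c_{j,a} = 1, d_a = i}, and A_p(m) is exactly the j-th summand
of M + B once the term 1 is split as the sum over a of c_{j,a}/d_a; the factor 0^{m_1} records
that a column of sum 1 kills the product, and the others turn the product into the exponential
since (1 - q^{i-1})^{m_i} = exp(-m_i a^i_p). Hence each row contributes at least Abar N p, while the
terms c_{j,a}/d_a summed over all rows give at most M.\<close>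

lemma sum_comp_eq_sum_card_fibres:
  assumes "finite S" "finite T" "d ` S \<subseteq> T"
  shows "(\<Sum>a\<in>S. g (d a)) = (\<Sum>i\<in>T. of_nat (card {a\<in>S. d a = i}) * g i)"
proof -
  have "(\<Sum>a\<in>S. g (d a)) = (\<Sum>i\<in>T. \<Sum>a\<in>{a\<in>S. d a = i}. g (d a))"
    by (rule sum.group[symmetric]) (use assms in auto)
  also have "\<dots> = (\<Sum>i\<in>T. of_nat (card {a\<in>S. d a = i}) * g i)"
    by (rule sum.cong) auto
  finally show ?thesis .
qed

lemma prod_comp_eq_prod_power_card_fibres:
  assumes "finite S" "finite T" "d ` S \<subseteq> T"
  shows "(\<Prod>a\<in>S. g (d a)) = (\<Prod>i\<in>T. g i ^ card {a\<in>S. d a = i})"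
proof -
  have "(\<Prod>a\<in>S. g (d a)) = (\<Prod>i\<in>T. \<Prod>a\<in>{a\<in>S. d a = i}. g (d a))"
    by (rule prod.group[symmetric]) (use assms in auto)
  also have "\<dots> = (\<Prod>i\<in>T. g i ^ card {a\<in>S. d a = i})"
    by (rule prod.cong) auto
  finally show ?thesis .
qed

lemma power_eq_exp_neg_abs_ln:
  fixes x :: real
  assumes "0 < x" "x \<le> 1"
  shows "x ^ n = exp (- (real n * \<bar>ln x\<bar>))"
proof -
  have "\<bar>ln x\<bar> = - ln x" using assms by simp
  then have "exp (- (real n * \<bar>ln x\<bar>)) = exp (ln x) ^ n"
    by (simp add: exp_of_nat_mult[symmetric])
  then show ?thesis using assms by simp
qed

lemma prod_power_eq_exp_a_coef:
  fixes p :: real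
  assumes "0 < p" "p < 1"
  shows "(\<Prod>i=2..N. (1 - (1 - p) ^ (i - 1)) ^ m i)
    = exp (- (\<Sum>i=2..N. real (m i) * a_coef p i))"
proof -
  have "(1 - (1 - p) ^ (i - 1)) ^ m i = exp (- (real (m i) * a_coef p i))"
    if "2 \<le> i" for i
  proof -
    have "(1 - p) ^ (i - 1) < 1" using assms that by (simp add: power_less_one_iff)
    moreover have "0 < (1 - p) ^ (i - 1)" using assms by simp
    ultimately show ?thesis
      unfolding a_coef_def by (intro power_eq_exp_neg_abs_ln) auto
  qed
  then have "(\<Prod>i=2..N. (1 - (1 - p) ^ (i - 1)) ^ m i)
      = (\<Prod>i=2..N. exp (- (real (m i) * a_coef p i)))"
    by (intro prod.cong) auto
  also have "\<dots> = exp (- (\<Sum>i=2..N. real (m i) * a_coef p i))"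
    by (simp add: exp_sum[symmetric] sum_negf)
  finally show ?thesis .
qed

lemma Afun_card_fibres:
  fixes p :: real and d :: "'a \<Rightarrow> nat"
  assumes "N \<ge> 1" "0 < p" "p < 1" "finite S" "d ` S \<subseteq> {1..N}"
  shows "Afun N p (\<lambda>i. card {a\<in>S. d a = i})
    = (\<Sum>a\<in>S. 1 / real (d a)) + (1 - p) * (\<Prod>a\<in>S. 1 - (1 - p) ^ (d a - 1))"
proof -
  define m where "m i = card {a\<in>S. d a = i}" for i
  define f where "f i = 1 - (1 - p) ^ (i - 1)" for i :: nat
  have "(\<Sum>a\<in>S. 1 / real (d a)) = (\<Sum>i=1..N. real (m i) / real i)"
    unfolding m_def
    using sum_comp_eq_sum_card_fibres[OF assms(4) _ assms(5), of "\<lambda>i. 1 / real i"] by simp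
  moreover have "(\<Prod>a\<in>S. f (d a)) = f 1 ^ m 1 * (\<Prod>i=2..N. f i ^ m i)"
    using prod_comp_eq_prod_power_card_fibres[OF assms(4) _ assms(5), of f] assms(1)
    by (simp add: m_def prod.atLeast_Suc_atMost numeral_2_eq_2)
  ultimately show ?thesis
    using prod_power_eq_exp_a_coef[OF assms(2,3), where N = N and m = m]
    by (simp add: Afun_def m_def f_def)
qed

lemma Abar_le_Afun:
  assumes "N \<ge> 1" "\<forall>i\<in>{1..N}. m i \<le> N"
  shows "Abar N p \<le> Afun N p m"
proof -
  have "Afun N p m = Afun N p (restrict m {1..N})"
    using assms(1) unfolding Afun_def by (intro arg_cong2[where f = "(+)"] sum.cong) auto
  moreover have "restrict m {1..N} \<in> {1..N} \<rightarrow>\<^sub>E {0..N}" using assms(2) by auto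
  ultimately show ?thesis
    unfolding Abar_def by (simp add: Min_le finite_PiE)
qed

lemma Abar_le_row_term:
  fixes p :: real and c :: "nat \<Rightarrow> nat \<Rightarrow> nat"
  assumes "N \<ge> 1" "0 < p" "p < 1" "M \<le> N"
    and c01: "\<forall>i\<in>{1..N}. \<forall>a\<in>{1..M}. c i a \<in> {0, 1}"
    and j: "j \<in> {1..N}"
  shows "Abar N p \<le> (\<Sum>a=1..M. real (c j a) / real (colsum N c a))
     + (1 - p) * (\<Prod>a=1..M. (1 - (1 - p) ^ (colsum N c a - 1)) ^ (c j a))"
proof -
  define S where "S = {a\<in>{1..M}. c j a = 1}"
  have "colsum N c a \<le> N" if "a \<in> {1..M}" for a
    using sum_mono[of "{1..N}" "\<lambda>l. c l a" "\<lambda>_. 1"] c01 that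
    unfolding colsum_def by fastforce
  moreover have "1 \<le> colsum N c a" if "a \<in> S" for a
    using member_le_sum[of j "{1..N}" "\<lambda>l. c l a"] j that
    unfolding S_def colsum_def by auto
  ultimately have range: "colsum N c ` S \<subseteq> {1..N}" unfolding S_def by force
  have "card {a\<in>S. colsum N c a = i} \<le> N" for i
    using card_mono[of "{1..M}" "{a\<in>S. colsum N c a = i}"] \<open>M \<le> N\<close>
    unfolding S_def by fastforce
  then have "Abar N p \<le> Afun N p (\<lambda>i. card {a\<in>S. colsum N c a = i})"
    using assms(1) by (intro Abar_le_Afun) auto
  also have "\<dots> = (\<Sum>a\<in>S. 1 / real (colsum N c a))
      + (1 - p) * (\<Prod>a\<in>S. 1 - (1 - p) ^ (colsum N c a - 1))"
    using Afun_card_fibres[OF assms(1-3) _ range] unfolding S_def by simp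
  also have "\<dots> = (\<Sum>a=1..M. real (c j a) / real (colsum N c a))
     + (1 - p) * (\<Prod>a=1..M. (1 - (1 - p) ^ (colsum N c a - 1)) ^ (c j a))"
  proof -
    have c01j: "c j a = 0 \<or> c j a = 1" if "a \<in> {1..M}" for a using c01 j that by auto
    have "(\<Sum>a=1..M. real (c j a) / real (colsum N c a)) = (\<Sum>a\<in>S. 1 / real (colsum N c a))"
      by (rule sum.mono_neutral_cong_right) (use c01j in \<open>force simp: S_def\<close>)+
    moreover have "(\<Prod>a=1..M. (1 - (1 - p) ^ (colsum N c a - 1)) ^ (c j a))
        = (\<Prod>a\<in>S. 1 - (1 - p) ^ (colsum N c a - 1))"
      by (rule prod.mono_neutral_cong_right) (use c01j in \<open>force simp: S_def\<close>)+
    ultimately show ?thesis by simp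
  qed
  finally show ?thesis .
qed

lemma sum_entries_div_colsum_le:
  fixes c :: "nat \<Rightarrow> nat \<Rightarrow> nat"
  shows "(\<Sum>j=1..N. \<Sum>a=1..M. real (c j a) / real (colsum N c a)) \<le> real M"
proof -
  have "(\<Sum>j=1..N. real (c j a) / real (colsum N c a)) \<le> 1" for a
    by (simp add: colsum_def sum_divide_distrib[symmetric])
  then have "(\<Sum>a=1..M. \<Sum>j=1..N. real (c j a) / real (colsum N c a)) \<le> (\<Sum>a=1..M. 1)"
    by (intro sum_mono)
  then show ?thesis by (subst sum.swap) simp
qed

theorem lemma2:
  fixes N M :: nat and p :: real and c :: "nat \<Rightarrow> nat \<Rightarrow> nat"
  assumes "N \<ge> 1" and "0 < p" and "p < 1"
    and "M \<in> {1..N}"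
    and "\<forall>i\<in>{1..N}. \<forall>a\<in>{1..M}. c i a \<in> {0, 1}"
  shows "real M + Bfun N M c p \<ge> real N * Abar N p"
proof -
  let ?d = "colsum N c"
  have "real N * Abar N p = (\<Sum>j=1..N. Abar N p)" by simp
  also have "\<dots> \<le> (\<Sum>j=1..N. (\<Sum>a=1..M. real (c j a) / real (?d a))
     + (1 - p) * (\<Prod>a=1..M. (1 - (1 - p) ^ (?d a - 1)) ^ (c j a)))"
    using assms by (intro sum_mono Abar_le_row_term) auto
  also have "\<dots> = (\<Sum>j=1..N. \<Sum>a=1..M. real (c j a) / real (?d a)) + Bfun N M c p"
    by (simp add: sum.distrib Bfun_def sum_distrib_left)
  also have "\<dots> \<le> real M + Bfun N M c p"
    using sum_entries_div_colsum_le by simp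
  finally show ?thesis .
qed

end
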